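(* Let $(B,+,\circ)$ be a left brace with Yang–Baxter map $r$, and let $X\subseteq B$ be such that $(X,r)$ is a nondegenerate involutive solution of the set-theoretic Yang–Baxter equation. Let $c\in B$ be central in the group $(B,\circ)$. (1) If the map $k_1(x)=c\circ x-c$ satisfies $k_1(X)\subseteq X$, then $k_1:X\to X$ is $\mathcal G(X,r)$-equivariant. (2) If the map $k_2(x)=c\circ x+c$ satisfies $k_2(X)\subseteq X$, then $k_2:X\to X$ is $\mathcal G(X,r)$-equivariant if and only if $2\,(c\circ x)=2x+2c$ for all $x\in X$.
   Context: A (left) brace is a triple $(B,+,\circ)$ such that $(B,+)$ is an abelian group with identity $0$, $(B,\circ)$ is a group, and $x\circ(y+z)=x\circ y+x\circ z-x$ for all $x,y,z\in B$; the inverse of $x$ in $(B,\circ)$ is written $x^{-1}$. The Yang–Baxter map of the brace is $r(x,y)=(\sigma_x(y),\tau_y(x))$ with $\sigma_x(y)=x\circ y-x$ and $\tau_y(x)=(\sigma_x(y))^{-1}\circ x-(\sigma_x(y))^{-1}$. For $X\subseteq B$, $(X,r)$ being a solution of the set-theoretic Yang–Baxter equation means $r(X\times X)\subseteq X\times X$ and the restriction of $r$ to $X\times X$ satisfies $(\mathrm{id}\times r)(r\times\mathrm{id})(\mathrm{id}\times r)=(r\times\mathrm{id})(\mathrm{id}\times r)(r\times\mathrm{id})$; it is involutive if $r^2=\mathrm{id}$ on $X\times X$, and nondegenerate if each $\sigma_x$ and each $\tau_y$ ($x,y\in X$) restricts to a bijection $X\to X$. A map $k:X\to X$ is $\mathcal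 G(X,r)$-equivariant if $k\sigma_x=\sigma_x k$ on $X$ for all $x\in X$. *)

theory Defs
  imports Main
begin

definition left_brace :: "('a::ab_group_add \<Rightarrow> 'a \<Rightarrow> 'a) \<Rightarrow> bool" where
  "left_brace circ \<longleftrightarrow>
     (\<forall>x y z. circ (circ x y) z = circ x (circ y z)) \<and>
     (\<exists>e. (\<forall>x. circ e x = x \<and> circ x e = x) \<and>
          (\<forall>x. \<exists>y. circ x y = e \<and> circ y x = e)) \<and>
     (\<forall>x y z. circ x (y + z) = circ x y + circ x z - x)"

definition circ_unit :: "('a \<Rightarrow> 'a \<Rightarrow> 'a) \<Rightarrow> 'a" where
  "circ_unit circ = (THE e. \<forall>x. circ e x = x \<and> circ x e = x)"

definition circ_inv :: "('a \<Rightarrow> 'a \<Rightarrow> 'a) \<Rightarrow> 'a \<Rightarrow> 'a" where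
  "circ_inv circ x = (THE y. circ x y = circ_unit circ \<and> circ y x = circ_unit circ)"

definition brace_sigma :: "('a::ab_group_add \<Rightarrow> 'a \<Rightarrow> 'a) \<Rightarrow> 'a \<Rightarrow> 'a \<Rightarrow> 'a" where
  "brace_sigma circ x y = circ x y - x"

definition brace_tau :: "('a::ab_group_add \<Rightarrow> 'a \<Rightarrow> 'a) \<Rightarrow> 'a \<Rightarrow> 'a \<Rightarrow> 'a" where
  "brace_tau circ y x =
     circ (circ_inv circ (brace_sigma circ x y)) x - circ_inv circ (brace_sigma circ x y)"

definition brace_r :: "('a::ab_group_add \<Rightarrow> 'a \<Rightarrow> 'a) \<Rightarrow> 'a \<times> 'a \<Rightarrow> 'a \<times> 'a" where
  "brace_r circ p = (brace_sigma circ (fst p) (snd p), brace_tau circ (snd p) (fst p))"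

definition r_id :: "('a \<times> 'a \<Rightarrow> 'a \<times> 'a) \<Rightarrow> 'a \<times> 'a \<times> 'a \<Rightarrow> 'a \<times> 'a \<times> 'a" where
  "r_id r t = (case t of (x, y, z) \<Rightarrow> (fst (r (x, y)), snd (r (x, y)), z))"

definition id_r :: "('a \<times> 'a \<Rightarrow> 'a \<times> 'a) \<Rightarrow> 'a \<times> 'a \<times> 'a \<Rightarrow> 'a \<times> 'a \<times> 'a" where
  "id_r r t = (case t of (x, y, z) \<Rightarrow> (x, fst (r (y, z)), snd (r (y, z))))"

definition ybe_solution :: "'a set \<Rightarrow> ('a \<times> 'a \<Rightarrow> 'a \<times> 'a) \<Rightarrow> bool" where
  "ybe_solution X r \<longleftrightarrow> r ` (X \<times> X) \<subseteq> X \<times> X \<and>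
     (\<forall>t \<in> X \<times> X \<times> X. id_r r (r_id r (id_r r t)) = r_id r (id_r r (r_id r t)))"

definition involutive_on :: "'a set \<Rightarrow> ('a \<times> 'a \<Rightarrow> 'a \<times> 'a) \<Rightarrow> bool" where
  "involutive_on X r \<longleftrightarrow> (\<forall>p \<in> X \<times> X. r (r p) = p)"

definition brace_nondegenerate :: "('a::ab_group_add \<Rightarrow> 'a \<Rightarrow> 'a) \<Rightarrow> 'a set \<Rightarrow> bool" where
  "brace_nondegenerate circ X \<longleftrightarrow>
     (\<forall>x \<in> X. bij_betw (brace_sigma circ x) X X \<and> bij_betw (brace_tau circ x) X X)"

definition G_equivariant :: "('a::ab_group_add \<Rightarrow> 'a \<Rightarrow> 'a) \<Rightarrow> 'a set \<Rightarrow> ('a \<Rightarrow> 'a) \<Rightarrow> bool" where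
  "G_equivariant circ X k \<longleftrightarrow>
     (\<forall>x \<in> X. \<forall>y \<in> X. k (brace_sigma circ x y) = brace_sigma circ x (k y))"

end

theory Submission
  imports Defs
begin

(* Left multiplication by c turns sigma_x(y) = x o y - x
   into sigma_(c o x)(y) + c, and sigma_x applied to c o y - c (resp. c o y + c) equals
   sigma_(x o c)(y) (resp. sigma_(x o c)(y) + 2 (x o c) - 2 x). For central c the two sides
   of the equivariance condition thus differ only by additive shifts, which cancel for k1
   and agree for k2 exactly when 2 (c o x) = 2 x + 2 c. *)

lemma left_brace_assoc: "left_brace circ \<Longrightarrow> circ (circ x y) z = circ x (circ y z)"
  unfolding left_brace_def by blast

lemma left_brace_add: "left_brace circ \<Longrightarrow> circ x (y + z) = circ x y + circ x z - x"
  unfolding left_brace_def by blast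

lemma left_brace_diff:
  assumes "left_brace circ"
  shows "circ x (y - z) = circ x y - circ x z + x"
proof -
  have "circ x y = circ x ((y - z) + z)" by simp
  also have "\<dots> = circ x (y - z) + circ x z - x" using left_brace_add[OF assms] .
  finally show ?thesis by (simp add: algebra_simps)
qed

lemma brace_sigma_left_mult:
  assumes "left_brace circ"
  shows "circ c (brace_sigma circ x y) = brace_sigma circ (circ c x) y + c"
  unfolding brace_sigma_def
  by (simp add: left_brace_diff[OF assms] left_brace_assoc[OF assms])

lemma brace_sigma_diff_right:
  assumes "left_brace circ"
  shows "brace_sigma circ x (circ c y - c) = brace_sigma circ (circ x c) y"
  unfolding brace_sigma_def
  by (simp add: left_brace_diff[OF assms] left_brace_assoc[OF assms])

lemma brace_sigma_add_right:
  assumes "left_brace circ"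
  shows "brace_sigma circ x (circ c y + c)
           = brace_sigma circ (circ x c) y + (circ x c + circ x c) - (x + x)"
  unfolding brace_sigma_def
  by (simp add: left_brace_add[OF assms] left_brace_assoc[OF assms] algebra_simps)

lemma G_equivariant_left_mult_diff:
  assumes "left_brace circ" and "\<forall>x. circ c x = circ x c"
  shows "G_equivariant circ X (\<lambda>x. circ c x - c)"
proof -
  have "circ x c = circ c x" for x using assms(2) by simp
  then show ?thesis
    unfolding G_equivariant_def
    by (simp add: brace_sigma_left_mult[OF assms(1)] brace_sigma_diff_right[OF assms(1)])
qed

lemma brace_sigma_commutes_left_mult_add_iff:
  assumes "left_brace circ" and "circ x c = circ c x"
  shows "circ c (brace_sigma circ x y) + c = brace_sigma circ x (circ c y + c)
           \<longleftrightarrow> circ c x + circ c x = (x + x) + (c + c)"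
proof -
  let ?s = "brace_sigma circ (circ c x) y"
  have "circ c (brace_sigma circ x y) + c = brace_sigma circ x (circ c y + c)
          \<longleftrightarrow> ?s + (c + c) = ?s + ((circ c x + circ c x) - (x + x))"
    by (simp add: brace_sigma_left_mult[OF assms(1)] brace_sigma_add_right[OF assms(1)]
        assms(2) add.assoc)
  also have "\<dots> \<longleftrightarrow> circ c x + circ c x = (x + x) + (c + c)"
    by (auto simp: algebra_simps)
  finally show ?thesis .
qed

lemma G_equivariant_left_mult_add_iff:
  assumes "left_brace circ" and "\<forall>x. circ c x = circ x c"
  shows "G_equivariant circ X (\<lambda>x. circ c x + c)
           \<longleftrightarrow> (\<forall>x \<in> X. circ c x + circ c x = (x + x) + (c + c))"
proof -
  have "circ x c = circ c x" for x using assms(2) by simp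
  then show ?thesis
    unfolding G_equivariant_def
    using brace_sigma_commutes_left_mult_add_iff[OF assms(1)] by blast
qed

theorem mainTheorem3:
  fixes circ :: "'a::ab_group_add \<Rightarrow> 'a \<Rightarrow> 'a" and X :: "'a set" and c :: 'a
  assumes "left_brace circ"
    and "ybe_solution X (brace_r circ)"
    and "involutive_on X (brace_r circ)"
    and "brace_nondegenerate circ X"
    and "\<forall>x. circ c x = circ x c"
  shows "((\<lambda>x. circ c x - c) ` X \<subseteq> X \<longrightarrow> G_equivariant circ X (\<lambda>x. circ c x - c)) \<and>
         ((\<lambda>x. circ c x + c) ` X \<subseteq> X \<longrightarrow>
            (G_equivariant circ X (\<lambda>x. circ c x + c) \<longleftrightarrow>
             (\<forall>x \<in> X. circ c x + circ c x = (x + x) + (c + c))))"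
  using G_equivariant_left_mult_diff[OF assms(1,5)]
    G_equivariant_left_mult_add_iff[OF assms(1,5)] by blast

end
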